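(* Let $\chi$ and $\eta$ be Dirichlet characters mod $N$ with $\chi$ primitive. Then $J_{\mathfrak J_2}(\chi,\eta)=N^4J(\chi,\chi,\eta)$.
   Context: $\mathfrak C_\mathbb Q$ is the (positive definite) Cayley octonion algebra with involution $x\mapsto\bar x$ and norm $N(x)=x\bar x$, and $\mathfrak o$ the order of integral Cayley numbers ($N|_\mathfrak o$ is a positive definite integral quadratic form of rank $8$ whose Gram matrix lies in $\frac12GL_8(\mathbb Z)$). $\mathfrak J_2(\mathbb Z)$ is the set of matrices $B=\begin{pmatrix}a&x\\ \bar x&b\end{pmatrix}$, $a,b\in\mathbb Z$, $x\in\mathfrak o$, with $\det B=ab-N(x)$, $\mathrm{Tr}(B)=a+b$, and $\mathfrak J_2(\mathbb Z/N\mathbb Z)=\mathfrak J_2(\mathbb Z)\otimes\mathbb Z/N\mathbb Z$. Dirichlet characters vanish on non-units mod $N$. $J_{\mathfrak J_2}(\chi_1,\chi_2)=\sum_{B\in\mathfrak J_2(\mathbb Z/N\mathbb Z)}\chi_1(\det B)\chi_2(1-\mathrm{Tr}(B))$ and $J(\chi_1,\chi_2,\chi_3)=\sum_{a_1+a_2+a_3=1,\ a_i\in\mathbb Z/N\mathbb Z}\chi_1(a_1)\chi_2(a_2)\chi_3(a_3)$. *)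

theory Defs
  imports "HOL-Number_Theory.Number_Theory" Complex_Main
begin

definition dirichlet_char :: "nat \<Rightarrow> (int \<Rightarrow> complex) \<Rightarrow> bool" where
  "dirichlet_char N \<chi> \<longleftrightarrow>
     (\<forall>a. \<chi> (a + int N) = \<chi> a) \<and>
     (\<forall>a b. \<chi> (a * b) = \<chi> a * \<chi> b) \<and>
     \<chi> 1 = 1 \<and>
     (\<forall>a. \<not> coprime a (int N) \<longrightarrow> \<chi> a = 0)"

text \<open>Primitive: not induced from any character of a modulus d properly dividing N,
  i.e. for every proper divisor d of N, chi is nontrivial on the units congruent to 1 mod d.\<close>
definition primitive_dirichlet_char :: "nat \<Rightarrow> (int \<Rightarrow> complex) \<Rightarrow> bool" where
  "primitive_dirichlet_char N \<chi> \<longleftrightarrow>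
     dirichlet_char N \<chi> \<and>
     (\<forall>d::nat. d dvd N \<and> d < N \<longrightarrow>
        (\<exists>a. coprime a (int N) \<and> [a = 1] (mod int d) \<and> \<chi> a \<noteq> 1))"

text \<open>The order o of integral Cayley numbers, with its norm form, is (up to isometry)
  the E8 lattice: o = Z^8 with N(x) = x^T C x / 2, C the E8 Cartan matrix
  (Gram matrix of N in (1/2) GL_8(Z), positive definite, integral).
  Dynkin edges (0-based): 0-2, 2-3, 3-4, 4-5, 5-6, 6-7, 1-3.\<close>
definition octo_norm :: "int list \<Rightarrow> int" where
  "octo_norm x = (\<Sum>i<8. (x ! i)^2)
     - (x!0 * x!2 + x!2 * x!3 + x!3 * x!4 + x!4 * x!5 + x!5 * x!6 + x!6 * x!7 + x!1 * x!3)"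

text \<open>Representatives of o/No (coordinates w.r.t. a Z-basis of o).\<close>
definition octo_mod :: "nat \<Rightarrow> int list set" where
  "octo_mod N = {x. length x = 8 \<and> set x \<subseteq> {0..<int N}}"

text \<open>J_J2(chi1,chi2): sum over B = (a, x; x-bar, b) in J_2(Z/NZ) of
  chi1(det B) chi2(1 - Tr B), det B = ab - N(x), Tr B = a + b.\<close>
definition jacobi_J2 :: "nat \<Rightarrow> (int \<Rightarrow> complex) \<Rightarrow> (int \<Rightarrow> complex) \<Rightarrow> complex" where
  "jacobi_J2 N \<chi>1 \<chi>2 =
     (\<Sum>a\<in>{0..<int N}. \<Sum>b\<in>{0..<int N}. \<Sum>x\<in>octo_mod N.
        \<chi>1 (a * b - octo_norm x) * \<chi>2 (1 - (a + b)))"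

definition jacobi3 :: "nat \<Rightarrow> (int \<Rightarrow> complex) \<Rightarrow> (int \<Rightarrow> complex) \<Rightarrow> (int \<Rightarrow> complex) \<Rightarrow> complex" where
  "jacobi3 N \<chi>1 \<chi>2 \<chi>3 =
     (\<Sum>a1\<in>{0..<int N}. \<Sum>a2\<in>{0..<int N}. \<chi>1 a1 * \<chi>2 a2 * \<chi>3 (1 - a1 - a2))"

end

theory Submission
  imports Defs
begin

text \<open>Everything reduces to the identity \<open>\<Sum>\<^sub>x \<chi>(c - N(x)) = N\<^sup>4 \<chi>(c)\<close>, the sum running over
  \<open>\<o>/N\<o>\<close>, which is then applied with \<open>c = ab\<close>.

  For primitive \<open>\<chi>\<close> the sum \<open>\<Sum>\<^sub>y \<chi>(c + a y)\<close> over \<open>y mod N\<close> vanishes unless \<open>N | a\<close>, so a sum of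
  \<open>\<chi>(c + \<lambda>(y))\<close> over \<open>y \<in> \<o>/N\<o>\<close>, \<open>\<lambda>\<close> a linear form, vanishes unless \<open>\<lambda> \<equiv> 0\<close>. Suppose \<open>\<phi>, \<psi>\<close> are
  linear with \<open>N(x + \<phi> y) \<equiv> N(x) + \<langle>\<psi> x, y\<rangle>\<close> mod \<open>N\<close>, and \<open>\<psi> x \<equiv> 0\<close> implies \<open>N(x) \<equiv> 0\<close>; that is,
  the image of \<open>\<phi>\<close> is a maximal isotropic subgroup of \<open>\<o>/N\<o>\<close>. Averaging over the translations
  \<open>x \<mapsto> x + \<phi> y\<close> gives \<open>\<Sum>\<^sub>x \<chi>(c - N(x)) = \<kappa> \<chi>(c)\<close> with \<open>\<kappa> = #{x. \<psi> x \<equiv> 0}\<close>, and evaluating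
  \<open>\<Sum>\<^sub>x\<^sub>,\<^sub>y \<chi>(c - N(x) + N(y))\<close> in two ways, once with this formula and once using that the polar form
  of \<open>N\<close> is unimodular, gives \<open>\<kappa>\<^sup>2 = N\<^sup>8\<close>.

  Such \<open>\<phi>\<close> exist: for \<open>p\<^sup>k \<parallel> N\<close> take \<open>\<phi>\<close> to be the \<open>k\<close>-th power of multiplication by an integral
  octonion of norm \<open>s\<^sup>2 + t\<^sup>2 + 1\<close> where \<open>p \<parallel> s\<^sup>2 + t\<^sup>2 + 1\<close>, and glue prime powers by the Chinese
  remainder theorem.\<close>

lemma periodic_add_mult:
  fixes f :: "int \<Rightarrow> 'b"
  assumes per: "\<And>a. f (a + m) = f a"
  shows "f (a + k * m) = f a"
proof (induction k rule: int_induct[where k = 0])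
  case base
  show ?case by simp
next
  case (step1 i)
  then show ?case using per[of "a + i * m"] by (simp add: algebra_simps)
next
  case (step2 i)
  then show ?case using per[of "a + (i - 1) * m"] by (simp add: algebra_simps)
qed

lemma periodic_cong:
  fixes f :: "int \<Rightarrow> 'b"
  assumes per: "\<And>a. f (a + m) = f a" and "[a = b] (mod m)"
  shows "f a = f b"
proof -
  obtain k where "b = a + k * m"
    using \<open>[a = b] (mod m)\<close> by (metis cong_iff_lin mult.commute)
  then show ?thesis using periodic_add_mult[of f m, OF per] by simp
qed

lemma sum_affine_residues:
  fixes m u e :: int
  assumes "0 < m" and "coprime u m"
  shows "(\<Sum>k\<in>{0..<m}. g ((e + u * k) mod m)) = (\<Sum>k\<in>{0..<m}. g k)"
proof -
  let ?h = "\<lambda>k. (e + u * k) mod m"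
  have inj: "inj_on ?h {0..<m}"
  proof
    fix x y assume "x \<in> {0..<m}" "y \<in> {0..<m}" "?h x = ?h y"
    moreover from \<open>?h x = ?h y\<close> have "[e + u * x = e + u * y] (mod m)"
      by (simp add: cong_def)
    then have "[u * x = u * y] (mod m)" by (simp add: cong_add_lcancel)
    then have "[x = y] (mod m)" using cong_mult_lcancel[OF \<open>coprime u m\<close>] by simp
    ultimately show "x = y" using cong_less_imp_eq_int by auto
  qed
  have "?h ` {0..<m} = {0..<m}"
    by (rule endo_inj_surj[OF _ _ inj]) (use \<open>0 < m\<close> in auto)
  then show ?thesis using sum.reindex[OF inj, of g] by simp
qed

lemma sum_progression_affine_reindex:
  fixes f :: "int \<Rightarrow> 'b::comm_monoid_add"
  assumes per: "\<And>a. f (a + d * m) = f a" and "0 < m" and "coprime u m"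
  shows "(\<Sum>k\<in>{0..<m}. f (c + d * (e + u * k))) = (\<Sum>k\<in>{0..<m}. f (c + d * k))"
proof -
  have "f (c + d * (e + u * k)) = f (c + d * ((e + u * k) mod m))" for k
  proof (rule periodic_cong[of f, OF per])
    have "[e + u * k = (e + u * k) mod m] (mod m)" by (simp add: cong_def)
    then show "[c + d * (e + u * k) = c + d * ((e + u * k) mod m)] (mod d * m)"
      by (intro cong_add cong_refl) (simp add: cong_def mod_mult_mult1)
  qed
  then show ?thesis
    using sum_affine_residues[OF \<open>0 < m\<close> \<open>coprime u m\<close>, of "\<lambda>k. f (c + d * k)" e] by simp
qed

lemma sum_periodic_multiple:
  fixes g :: "int \<Rightarrow> 'b::semiring_1"
  assumes "0 < m" and per: "\<And>y. g (y + m) = g y"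
  shows "(\<Sum>y\<in>{0..<int q * m}. g y) = of_nat q * (\<Sum>y\<in>{0..<m}. g y)"
proof (induction q)
  case 0
  show ?case by simp
next
  case (Suc q)
  have "0 \<le> int q * m" using \<open>0 < m\<close> by simp
  then have split: "{0..<int (Suc q) * m} = {0..<int q * m} \<union> {int q * m..<int q * m + m}"
    using ivl_disj_un_two(3)[of 0 "int q * m" "int q * m + m"] \<open>0 < m\<close>
    by (simp add: algebra_simps)
  have "(\<Sum>y\<in>{int q * m..<int q * m + m}. g y) = (\<Sum>y\<in>{0..<m}. g (y + int q * m))"
    by (rule sum.reindex_bij_witness[where i = "\<lambda>y. y + int q * m" and j = "\<lambda>y. y - int q * m"])
      auto
  also have "\<dots> = (\<Sum>y\<in>{0..<m}. g y)" using periodic_add_mult[of g m, OF per] by simp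
  finally show ?case
    unfolding split using Suc by (subst sum.union_disjoint) (auto simp: algebra_simps)
qed

text \<open>The one consequence of the primitivity of a character that the argument uses.\<close>
definition primitive_periodic :: "int \<Rightarrow> (int \<Rightarrow> 'a::comm_ring_1) \<Rightarrow> bool" where
  "primitive_periodic n f \<longleftrightarrow> (\<forall>a. f (a + n) = f a) \<and>
     (\<forall>d c. d dvd n \<and> 0 < d \<and> d < n \<longrightarrow> (\<Sum>k\<in>{0..<n div d}. f (c + d * k)) = 0)"

lemma primitive_periodic_periodic: "primitive_periodic n f \<Longrightarrow> f (a + n) = f a"
  by (simp add: primitive_periodic_def)

lemma primitive_periodic_sum_linear:
  assumes pf: "primitive_periodic n f" and "0 < n"
  shows "(\<Sum>y\<in>{0..<n}. f (c + a * y)) = (if n dvd a then of_int n * f c else 0)"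
proof (cases "n dvd a")
  case True
  have "f (c + a * y) = f c" for y
    by (rule periodic_cong[of f n, OF primitive_periodic_periodic[OF pf]])
      (use True in \<open>simp add: cong_add_lcancel_0 cong_0_iff\<close>)
  then show ?thesis using True \<open>0 < n\<close> by simp
next
  case False
  define d where "d = gcd a n"
  define m where "m = n div d"
  define u where "u = a div d"
  have "0 < d" "d dvd n" using \<open>0 < n\<close> by (simp_all add: d_def)
  have n: "n = d * m" and a: "a = d * u" by (simp_all add: d_def m_def u_def)
  have "d \<noteq> n" using False by (metis d_def gcd_dvd1)
  then have "d < n" using zdvd_imp_le[OF \<open>d dvd n\<close> \<open>0 < n\<close>] by simp
  have "0 < m" using \<open>0 < n\<close> \<open>0 < d\<close> n by (simp add: zero_less_mult_iff)
  have "coprime u m" using div_gcd_coprime[of a n] \<open>0 < n\<close> by (simp add: u_def m_def d_def)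
  have per: "f (z + d * m) = f z" for z using primitive_periodic_periodic[OF pf] n by simp
  have "f (c + a * (y + m)) = f (c + a * y)" for y
  proof -
    have "c + a * (y + m) = (c + a * y) + u * n" using n a by (simp add: algebra_simps)
    then show ?thesis by (simp only: periodic_add_mult[of f n, OF primitive_periodic_periodic[OF pf]])
  qed
  then have "(\<Sum>y\<in>{0..<int (nat d) * m}. f (c + a * y))
      = of_nat (nat d) * (\<Sum>y\<in>{0..<m}. f (c + a * y))"
    by (rule sum_periodic_multiple[OF \<open>0 < m\<close>])
  also have "(\<Sum>y\<in>{0..<m}. f (c + a * y)) = (\<Sum>k\<in>{0..<n div d}. f (c + d * k))"
    using sum_progression_affine_reindex[of f d m u c 0, OF per \<open>0 < m\<close> \<open>coprime u m\<close>]
    by (simp add: a m_def mult.assoc)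
  also have "\<dots> = 0" using pf \<open>d dvd n\<close> \<open>0 < d\<close> \<open>d < n\<close> by (simp add: primitive_periodic_def)
  finally show ?thesis using False \<open>0 < d\<close> n by simp
qed

lemma primitive_periodic_reflect:
  assumes pf: "primitive_periodic n f"
  shows "primitive_periodic n (\<lambda>z. f (- z))"
  unfolding primitive_periodic_def
proof (intro conjI allI impI)
  show "f (- (a + n)) = f (- a)" for a
    using primitive_periodic_periodic[OF pf, of "- a - n"] by simp
  fix d c assume d: "d dvd n \<and> 0 < d \<and> d < n"
  define m where "m = n div d"
  have "(\<Sum>k\<in>{0..<m}. f (- (c + d * k))) = (\<Sum>k\<in>{0..<m}. f ((- c - d * (m - 1)) + d * k))"
    by (rule sum.reindex_bij_witness[where i = "\<lambda>k. m - 1 - k" and j = "\<lambda>k. m - 1 - k"])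
      (auto simp: algebra_simps)
  also have "\<dots> = 0" using pf d by (simp add: primitive_periodic_def m_def)
  finally show "(\<Sum>k\<in>{0..<n div d}. f (- (c + d * k))) = 0" by (simp add: m_def)
qed

lemma primitive_dirichlet_char_imp_primitive_periodic:
  assumes "0 < N" and pc: "primitive_dirichlet_char N \<chi>"
  shows "primitive_periodic (int N) \<chi>"
proof -
  have per: "\<chi> (a + int N) = \<chi> a" and mult: "\<chi> (a * b) = \<chi> a * \<chi> b" for a b
    using pc by (simp_all add: primitive_dirichlet_char_def dirichlet_char_def)
  have "(\<Sum>k\<in>{0..<m}. \<chi> (c + d * k)) = 0"
    if "d dvd int N" "0 < d" "d < int N" and m: "m = int N div d" for d c m
  proof -
    have "nat d dvd N" "nat d < N" "int (nat d) = d" using that by (simp_all add: nat_dvd_iff)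
    then obtain a where "coprime a (int N)" "[a = 1] (mod d)" "\<chi> a \<noteq> 1"
      using pc unfolding primitive_dirichlet_char_def by metis
    have n: "int N = d * m" using \<open>d dvd int N\<close> m by simp
    have "0 < d * m" using n \<open>0 < N\<close> by simp
    then have "0 < m" using \<open>0 < d\<close> by (simp add: zero_less_mult_iff)
    obtain e where a: "a = 1 + d * e"
      using \<open>[a = 1] (mod d)\<close> by (metis cong_iff_lin mult.commute cong_sym)
    have "coprime a m" using \<open>coprime a (int N)\<close> n by simp
    have "\<chi> a * (\<Sum>k\<in>{0..<m}. \<chi> (c + d * k)) = (\<Sum>k\<in>{0..<m}. \<chi> (a * (c + d * k)))"
      by (simp add: sum_distrib_left mult)
    also have "\<dots> = (\<Sum>k\<in>{0..<m}. \<chi> (c + d * (e * c + a * k)))"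
      by (rule sum.cong) (simp_all add: a algebra_simps)
    also have "\<dots> = (\<Sum>k\<in>{0..<m}. \<chi> (c + d * k))"
      using sum_progression_affine_reindex[of \<chi> d m a c "e * c"] per n \<open>0 < m\<close> \<open>coprime a m\<close>
      by simp
    finally show ?thesis using \<open>\<chi> a \<noteq> 1\<close> by (simp add: algebra_simps)
  qed
  then show ?thesis using per by (auto simp: primitive_periodic_def)
qed

definition residue_vectors :: "int \<Rightarrow> nat \<Rightarrow> int list set" where
  "residue_vectors n k = {xs. set xs \<subseteq> {0..<n} \<and> length xs = k}"

lemma finite_residue_vectors [simp]: "finite (residue_vectors n k)"
  unfolding residue_vectors_def by (rule finite_lists_length_eq) simp

lemma card_residue_vectors: "0 \<le> n \<Longrightarrow> card (residue_vectors n k) = nat n ^ k"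
  unfolding residue_vectors_def by (subst card_lists_length_eq) simp_all

lemma sum_residue_vectors_Suc:
  "(\<Sum>xs\<in>residue_vectors n (Suc k). F xs) = (\<Sum>a\<in>{0..<n}. \<Sum>xs\<in>residue_vectors n k. F (a # xs))"
proof -
  have eq: "residue_vectors n (Suc k) = (\<lambda>(xs, a). a # xs) ` (residue_vectors n k \<times> {0..<n})"
    unfolding residue_vectors_def by (rule lists_length_Suc_eq)
  have inj: "inj_on (\<lambda>(xs, a). a # xs) (residue_vectors n k \<times> {0..<n})"
    by (auto simp: inj_on_def)
  have "(\<Sum>xs\<in>residue_vectors n (Suc k). F xs)
      = (\<Sum>p\<in>residue_vectors n k \<times> {0..<n}. F (case p of (xs, a) \<Rightarrow> a # xs))"
    unfolding eq by (simp add: sum.reindex[OF inj] o_def)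
  also have "\<dots> = (\<Sum>xs\<in>residue_vectors n k. \<Sum>a\<in>{0..<n}. F (a # xs))"
    by (simp add: sum.cartesian_product case_prod_beta)
  finally show ?thesis by (simp add: sum.swap[of _ "residue_vectors n k"])
qed

lemma primitive_periodic_sum_linear_form:
  assumes pf: "primitive_periodic n f" and "0 < n"
  shows "(\<Sum>y\<in>residue_vectors n k. f (c + (\<Sum>j<k. w j * y ! j))) =
           (if \<forall>j<k. n dvd w j then of_int n ^ k * f c else 0)"
proof (induction k arbitrary: c w)
  case 0
  have "residue_vectors n 0 = {[]}" by (auto simp: residue_vectors_def)
  then show ?case by simp
next
  case (Suc k)
  have split: "(\<forall>j<Suc k. n dvd w j) \<longleftrightarrow> n dvd w 0 \<and> (\<forall>j<k. n dvd w (Suc j))"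
    by (auto simp: less_Suc_eq_0_disj)
  have "(\<Sum>y\<in>residue_vectors n (Suc k). f (c + (\<Sum>j<Suc k. w j * y ! j)))
      = (\<Sum>a\<in>{0..<n}. \<Sum>xs\<in>residue_vectors n k. f ((c + w 0 * a) + (\<Sum>j<k. w (Suc j) * xs ! j)))"
    unfolding sum_residue_vectors_Suc
    by (simp del: sum.lessThan_Suc add: sum.lessThan_Suc_shift add.assoc)
  also have "\<dots> = (\<Sum>a\<in>{0..<n}. if \<forall>j<k. n dvd w (Suc j)
      then of_int n ^ k * f (c + w 0 * a) else 0)"
    using Suc.IH[of _ "\<lambda>j. w (Suc j)"] by simp
  also have "\<dots> = (if \<forall>j<k. n dvd w (Suc j)
      then of_int n ^ k * (\<Sum>a\<in>{0..<n}. f (c + w 0 * a)) else 0)"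
  proof (cases "\<forall>j<k. n dvd w (Suc j)")
    case True
    then show ?thesis by (simp add: sum_distrib_left)
  next
    case False
    then show ?thesis by (simp only: if_not_P[OF False] if_False sum.neutral_const)
  qed
  also have "\<dots> = (if \<forall>j<Suc k. n dvd w j then of_int n ^ Suc k * f c else 0)"
    unfolding split primitive_periodic_sum_linear[OF pf \<open>0 < n\<close>] by (auto simp: ac_simps)
  finally show ?case .
qed

definition vec8 :: "(nat \<Rightarrow> int) \<Rightarrow> int list" where
  "vec8 f = [f 0, f 1, f 2, f 3, f 4, f 5, f 6, f 7]"

lemma less_8_cases: "(i::nat) < 8 \<longleftrightarrow> i = 0 \<or> i = 1 \<or> i = 2 \<or> i = 3 \<or> i = 4 \<or> i = 5 \<or> i = 6 \<or> i = 7"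
  by auto

lemma nth_vec8 [simp]: "i < 8 \<Longrightarrow> vec8 f ! i = f i"
  unfolding less_8_cases by (auto simp: vec8_def)

lemma length_vec8 [simp]: "length (vec8 f) = 8"
  by (simp add: vec8_def)

lemma sum_lessThan_8: "(\<Sum>j<(8::nat). f j) = f 0 + f 1 + f 2 + f 3 + f 4 + f 5 + f 6 + (f 7 :: int)"
  by (simp add: eval_nat_numeral)

definition vec_add :: "int list \<Rightarrow> int list \<Rightarrow> int list" where
  "vec_add x y = vec8 (\<lambda>i. x ! i + y ! i)"

definition dot :: "int list \<Rightarrow> int list \<Rightarrow> int" where
  "dot w y = (\<Sum>j<8. w ! j * y ! j)"

text \<open>The E8 Cartan matrix, i.e. the Gram matrix of the polar form of \<open>octo_norm\<close>, and its
  inverse; both are integral, so the polar form is unimodular.\<close>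
definition gram :: "int list \<Rightarrow> int list" where
  "gram y = [
     2 * y!0 - y!2,
     2 * y!1 - y!3,
     - y!0 + 2 * y!2 - y!3,
     - y!1 - y!2 + 2 * y!3 - y!4,
     - y!3 + 2 * y!4 - y!5,
     - y!4 + 2 * y!5 - y!6,
     - y!5 + 2 * y!6 - y!7,
     - y!6 + 2 * y!7]"

definition gram_inv :: "int list \<Rightarrow> int list" where
  "gram_inv y = [
     4 * y!0 + 5 * y!1 + 7 * y!2 + 10 * y!3 + 8 * y!4 + 6 * y!5 + 4 * y!6 + 2 * y!7,
     5 * y!0 + 8 * y!1 + 10 * y!2 + 15 * y!3 + 12 * y!4 + 9 * y!5 + 6 * y!6 + 3 * y!7,
     7 * y!0 + 10 * y!1 + 14 * y!2 + 20 * y!3 + 16 * y!4 + 12 * y!5 + 8 * y!6 + 4 * y!7,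
     10 * y!0 + 15 * y!1 + 20 * y!2 + 30 * y!3 + 24 * y!4 + 18 * y!5 + 12 * y!6 + 6 * y!7,
     8 * y!0 + 12 * y!1 + 16 * y!2 + 24 * y!3 + 20 * y!4 + 15 * y!5 + 10 * y!6 + 5 * y!7,
     6 * y!0 + 9 * y!1 + 12 * y!2 + 18 * y!3 + 15 * y!4 + 12 * y!5 + 8 * y!6 + 4 * y!7,
     4 * y!0 + 6 * y!1 + 8 * y!2 + 12 * y!3 + 10 * y!4 + 8 * y!5 + 6 * y!6 + 3 * y!7,
     2 * y!0 + 3 * y!1 + 4 * y!2 + 6 * y!3 + 5 * y!4 + 4 * y!5 + 3 * y!6 + 2 * y!7]"

lemma octo_norm_expand:
  "octo_norm x = (x!0)^2 + (x!1)^2 + (x!2)^2 + (x!3)^2 + (x!4)^2 + (x!5)^2 + (x!6)^2 + (x!7)^2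
     - (x!0 * x!2 + x!2 * x!3 + x!3 * x!4 + x!4 * x!5 + x!5 * x!6 + x!6 * x!7 + x!1 * x!3)"
  unfolding octo_norm_def sum_lessThan_8 by simp

lemma octo_norm_vec_add: "octo_norm (vec_add x y) = octo_norm x + octo_norm y + dot (gram x) y"
  unfolding octo_norm_expand vec_add_def vec8_def dot_def sum_lessThan_8 gram_def
  by (simp add: algebra_simps power2_eq_square)

lemma gram_inv_gram: "gram_inv (gram x) = vec8 (\<lambda>i. x ! i)"
  unfolding gram_inv_def gram_def vec8_def by (simp add: algebra_simps)

lemma dvd_gram_imp_dvd:
  assumes "\<forall>j<8. d dvd gram x ! j" and "i < 8"
  shows "d dvd x ! i"
proof -
  have "d dvd gram_inv w ! i" if "\<forall>j<8. d dvd w ! j" for w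
  proof -
    have "d dvd w ! 0" "d dvd w ! Suc 0" "d dvd w ! 2" "d dvd w ! 3" "d dvd w ! 4"
      "d dvd w ! 5" "d dvd w ! 6" "d dvd w ! 7"
      using that by simp_all
    then show ?thesis using \<open>i < 8\<close> unfolding less_8_cases
      by (elim disjE; simp add: gram_inv_def; intro dvd_add dvd_mult; simp)
  qed
  from this[of "gram x"] show ?thesis using assms by (simp add: gram_inv_gram)
qed

lemma octo_norm_cong:
  assumes "\<forall>i<8. [x ! i = y ! i] (mod n)"
  shows "[octo_norm x = octo_norm y] (mod n)"
proof -
  have "[x ! i = y ! i] (mod n)" if "i < 8" for i using assms that by simp
  then show ?thesis unfolding octo_norm_expand
    by (intro cong_diff cong_add cong_mult cong_pow) simp_all
qed

lemma dot_cong: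
  assumes "\<forall>i<8. [w ! i = w' ! i] (mod n)"
  shows "[dot w y = dot w' y] (mod n)"
  unfolding dot_def using assms by (intro cong_sum cong_mult) auto

lemma sq_dvd_octo_norm:
  assumes "\<forall>i<8. d dvd x ! i"
  shows "d^2 dvd octo_norm x"
proof -
  have "d dvd x ! i" if "i < 8" for i using assms that by simp
  then show ?thesis unfolding octo_norm_expand power2_eq_square
    by (intro dvd_add dvd_diff mult_dvd_mono) simp_all
qed

text \<open>\<open>unit_u\<close> and \<open>unit_v\<close> are anticommuting automorphisms of the E8 lattice that square to
  \<open>-1\<close> and are skew-adjoint for its polar form, such as the left multiplications by two orthogonal
  imaginary units of \<open>\<o>\<close>. Hence \<open>1 + s u + t v\<close> multiplies the norm by \<open>s\<^sup>2 + t\<^sup>2 + 1\<close> and has adjoint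
  \<open>1 - s u - t v\<close>.\<close>
definition unit_u :: "int list \<Rightarrow> int list" where
  "unit_u y = [
     y!0 - 2 * y!1 + y!5,
     y!0 - 3 * y!1 + y!2 + y!5,
     2 * y!0 - 4 * y!1 + y!2 + y!5,
     2 * y!0 - 6 * y!1 + 2 * y!2 + y!5 + y!6,
     y!0 - 5 * y!1 + 2 * y!2 + y!5 + y!6 - y!7,
     - 4 * y!1 + 2 * y!2 + y!5,
     - 2 * y!1 + 2 * y!2 - y!3 + y!5,
     - y!1 + y!2 - y!3 + y!4]"

definition unit_v :: "int list \<Rightarrow> int list" where
  "unit_v y = [
     y!3 - 2 * y!4 + y!6 + y!7,
     y!3 - 2 * y!4 + 3 * y!7,
     2 * y!3 - 4 * y!4 + y!5 + 3 * y!7,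
     3 * y!3 - 5 * y!4 + 5 * y!7,
     - y!1 + 3 * y!3 - 4 * y!4 + 4 * y!7,
     - y!1 - y!2 + 3 * y!3 - 3 * y!4 + 3 * y!7,
     - y!0 - y!1 + 2 * y!3 - 2 * y!4 + 2 * y!7,
     - y!1 + y!3 - y!4 + y!7]"

definition similitude :: "int \<Rightarrow> int \<Rightarrow> int list \<Rightarrow> int list" where
  "similitude s t y = vec8 (\<lambda>i. y ! i + s * unit_u y ! i + t * unit_v y ! i)"

lemma octo_norm_similitude: "octo_norm (similitude s t y) = (s^2 + t^2 + 1) * octo_norm y"
  unfolding octo_norm_expand similitude_def vec8_def unit_u_def unit_v_def
  by (simp add: algebra_simps power2_eq_square)

lemma dot_gram_similitude: "dot (gram x) (similitude s t y) = dot (gram (similitude (-s) (-t) x)) y"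
  unfolding similitude_def vec8_def unit_u_def unit_v_def dot_def sum_lessThan_8 gram_def
  by (simp add: algebra_simps)

lemma octo_norm_similitude_funpow:
  "octo_norm ((similitude s t ^^ k) y) = (s^2 + t^2 + 1)^k * octo_norm y"
  by (induction k) (simp_all add: octo_norm_similitude)

lemma dot_gram_similitude_funpow:
  "dot (gram x) ((similitude s t ^^ k) y) = dot (gram ((similitude (-s) (-t) ^^ k) x)) y"
proof (induction k arbitrary: x)
  case 0
  then show ?case by simp
next
  case (Suc k)
  have "dot (gram x) ((similitude s t ^^ Suc k) y)
      = dot (gram ((similitude (-s) (-t) ^^ k) (similitude (-s) (-t) x))) y"
    by (simp add: dot_gram_similitude Suc.IH)
  then show ?case by (simp add: funpow_Suc_right del: funpow.simps)
qed

definition translate :: "int \<Rightarrow> int list \<Rightarrow> int list \<Rightarrow> int list" where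
  "translate n v x = vec8 (\<lambda>i. (x ! i + v ! i) mod n)"

lemma translate_in_residue_vectors: "0 < n \<Longrightarrow> translate n v x \<in> residue_vectors n 8"
  by (auto simp: residue_vectors_def translate_def vec8_def)

lemma translate_translate_neg:
  assumes "x \<in> residue_vectors n 8"
  shows "translate n (vec8 (\<lambda>i. - v ! i)) (translate n v x) = x"
    and "translate n v (translate n (vec8 (\<lambda>i. - v ! i)) x) = x"
proof -
  have "length x = 8" using assms by (simp add: residue_vectors_def)
  moreover have "x ! i mod n = x ! i" if "i < 8" for i
    using assms that nth_mem[of i x] by (auto simp: residue_vectors_def subset_iff)
  ultimately show "translate n (vec8 (\<lambda>i. - v ! i)) (translate n v x) = x"
    and "translate n v (translate n (vec8 (\<lambda>i. - v ! i)) x) = x"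
    by (auto intro!: nth_equalityI simp: translate_def mod_add_left_eq mod_diff_left_eq)
qed

lemma sum_translate:
  assumes "0 < n"
  shows "(\<Sum>x\<in>residue_vectors n 8. g (translate n v x)) = (\<Sum>x\<in>residue_vectors n 8. g x)"
proof -
  have "bij_betw (translate n v) (residue_vectors n 8) (residue_vectors n 8)"
    by (rule bij_betw_byWitness[where f' = "translate n (vec8 (\<lambda>i. - v ! i))"])
      (auto simp: translate_translate_neg translate_in_residue_vectors assms)
  then show ?thesis by (rule sum.reindex_bij_betw)
qed

lemma octo_norm_translate_cong: "[octo_norm (translate n v x) = octo_norm (vec_add x v)] (mod n)"
  by (rule octo_norm_cong) (simp add: translate_def vec_add_def cong_def)

text \<open>The first clause says that the image of \<open>\<phi>\<close> is totally isotropic mod \<open>n\<close> and that \<open>\<psi>\<close> is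
  the transpose of \<open>\<phi>\<close> for the polar form; the second makes this image maximal isotropic.\<close>
definition lagrangian_pair :: "int \<Rightarrow> (int list \<Rightarrow> int list) \<Rightarrow> (int list \<Rightarrow> int list) \<Rightarrow> bool" where
  "lagrangian_pair n \<phi> \<psi> \<longleftrightarrow>
     (\<forall>x y. [octo_norm (vec_add x (\<phi> y)) = octo_norm x + dot (\<psi> x) y] (mod n)) \<and>
     (\<forall>x. (\<forall>j<8. n dvd \<psi> x ! j) \<longrightarrow> n dvd octo_norm x)"

definition annihilator :: "int \<Rightarrow> (int list \<Rightarrow> int list) \<Rightarrow> int list set" where
  "annihilator n \<psi> = {x \<in> residue_vectors n 8. \<forall>j<8. n dvd \<psi> x ! j}"

lemma sum_sum_dot_annihilator:
  fixes f :: "int \<Rightarrow> 'a::comm_ring_1"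
  assumes "primitive_periodic n f" and "0 < n"
  shows "(\<Sum>y\<in>residue_vectors n 8. \<Sum>x\<in>residue_vectors n 8. f (g x - dot (\<psi> x) y))
    = (\<Sum>x\<in>annihilator n \<psi>. of_int n ^ 8 * f (g x))"
proof -
  have "(\<Sum>y\<in>residue_vectors n 8. f (g x - dot (\<psi> x) y))
      = (if \<forall>j<8. n dvd \<psi> x ! j then of_int n ^ 8 * f (g x) else 0)" for x
    using primitive_periodic_sum_linear_form[OF assms, where k = 8 and c = "g x"
        and w = "\<lambda>j. - (\<psi> x ! j)"]
    by (simp add: dot_def sum_negf)
  then show ?thesis
    by (simp add: sum.swap[of _ "residue_vectors n 8"] annihilator_def sum.inter_filter)
qed

lemma lagrangian_pair_sum_octo_norm:
  fixes f :: "int \<Rightarrow> 'a::{idom, ring_char_0}"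
  assumes pf: "primitive_periodic n f" and "0 < n" and lp: "lagrangian_pair n \<phi> \<psi>"
  shows "(\<Sum>x\<in>residue_vectors n 8. f (c - octo_norm x)) = of_nat (card (annihilator n \<psi>)) * f c"
proof -
  let ?R = "residue_vectors n 8"
  note per = primitive_periodic_periodic[OF pf]
  have shift: "f (c - octo_norm (translate n (\<phi> y) x)) = f ((c - octo_norm x) - dot (\<psi> x) y)"
    for x y
  proof (rule periodic_cong[of f n, OF per])
    have "[octo_norm (translate n (\<phi> y) x) = octo_norm x + dot (\<psi> x) y] (mod n)"
      using octo_norm_translate_cong lp unfolding lagrangian_pair_def by (blast intro: cong_trans)
    then have "[c - octo_norm (translate n (\<phi> y) x) = c - (octo_norm x + dot (\<psi> x) y)] (mod n)"
      by (intro cong_diff cong_refl)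
    then show "[c - octo_norm (translate n (\<phi> y) x) = (c - octo_norm x) - dot (\<psi> x) y] (mod n)"
      by (simp add: algebra_simps)
  qed
  have isotropic: "f (c - octo_norm x) = f c" if "x \<in> annihilator n \<psi>" for x
  proof (rule periodic_cong[of f n, OF per])
    have "n dvd octo_norm x" using that lp by (simp add: annihilator_def lagrangian_pair_def)
    then show "[c - octo_norm x = c] (mod n)" by (simp add: cong_iff_dvd_diff)
  qed
  have "(\<Sum>x\<in>?R. f (c - octo_norm (translate n (\<phi> y) x))) = (\<Sum>x\<in>?R. f (c - octo_norm x))"
    for y using sum_translate[OF \<open>0 < n\<close>, of "\<lambda>x. f (c - octo_norm x)"] by simp
  then have "of_int n ^ 8 * (\<Sum>x\<in>?R. f (c - octo_norm x))
      = (\<Sum>y\<in>?R. \<Sum>x\<in>?R. f (c - octo_norm (translate n (\<phi> y) x)))"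
    using \<open>0 < n\<close> by (simp add: card_residue_vectors of_nat_power)
  also have "\<dots> = (\<Sum>x\<in>annihilator n \<psi>. of_int n ^ 8 * f (c - octo_norm x))"
    by (simp add: shift sum_sum_dot_annihilator[OF pf \<open>0 < n\<close>])
  also have "\<dots> = of_int n ^ 8 * (of_nat (card (annihilator n \<psi>)) * f c)"
    by (simp add: isotropic)
  finally show ?thesis using \<open>0 < n\<close> by simp
qed

lemma annihilator_gram:
  assumes "0 < n"
  shows "annihilator n gram = {replicate 8 0}"
proof
  show "annihilator n gram \<subseteq> {replicate 8 0}"
  proof
    fix x assume x: "x \<in> annihilator n gram"
    have "x ! i = 0" if "i < 8" for i
    proof -
      have "n dvd x ! i" using x that dvd_gram_imp_dvd by (auto simp: annihilator_def)
      moreover have "0 \<le> x ! i" "x ! i < n"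
        using x that nth_mem[of i x] by (auto simp: annihilator_def residue_vectors_def subset_iff)
      ultimately show ?thesis using zdvd_not_zless[of "x ! i" n] by fastforce
    qed
    then show "x \<in> {replicate 8 0}"
      using x by (auto intro: nth_equalityI simp: annihilator_def residue_vectors_def)
  qed
  show "{replicate 8 0} \<subseteq> annihilator n gram"
    using assms by (auto simp: annihilator_def residue_vectors_def gram_def less_8_cases)
qed

lemma sum_sum_octo_norm_diff:
  fixes f :: "int \<Rightarrow> 'a::comm_ring_1"
  assumes pf: "primitive_periodic n f" and "0 < n"
  shows "(\<Sum>y\<in>residue_vectors n 8. \<Sum>x\<in>residue_vectors n 8. f (c - octo_norm x + octo_norm y))
    = of_int n ^ 8 * f c"
proof -
  let ?R = "residue_vectors n 8"
  have shift: "f (c - octo_norm (translate n y h) + octo_norm y) = f ((c - octo_norm h) - dot (gram h) y)"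
    for y h
  proof (rule periodic_cong[of f n, OF primitive_periodic_periodic[OF pf]])
    have "[octo_norm (translate n y h) = octo_norm h + octo_norm y + dot (gram h) y] (mod n)"
      using octo_norm_translate_cong[of n y h] by (simp add: octo_norm_vec_add)
    then have "[c - octo_norm (translate n y h) + octo_norm y
        = c - (octo_norm h + octo_norm y + dot (gram h) y) + octo_norm y] (mod n)"
      by (intro cong_add cong_diff cong_refl)
    then show "[c - octo_norm (translate n y h) + octo_norm y = (c - octo_norm h) - dot (gram h) y] (mod n)"
      by (simp add: algebra_simps)
  qed
  have "(\<Sum>h\<in>?R. f (c - octo_norm (translate n y h) + octo_norm y))
      = (\<Sum>x\<in>?R. f (c - octo_norm x + octo_norm y))" for y
    using sum_translate[OF \<open>0 < n\<close>, of "\<lambda>x. f (c - octo_norm x + octo_norm y)"] by simp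
  then have "(\<Sum>y\<in>?R. \<Sum>x\<in>?R. f (c - octo_norm x + octo_norm y))
      = (\<Sum>y\<in>?R. \<Sum>h\<in>?R. f (c - octo_norm (translate n y h) + octo_norm y))"
    by simp
  also have "\<dots> = (\<Sum>h\<in>annihilator n gram. of_int n ^ 8 * f (c - octo_norm h))"
    by (simp add: shift sum_sum_dot_annihilator[OF pf \<open>0 < n\<close>])
  also have "\<dots> = of_int n ^ 8 * f c"
    by (simp add: annihilator_gram[OF \<open>0 < n\<close>] octo_norm_def)
  finally show ?thesis .
qed

text \<open>Evaluate \<open>\<Sum>\<^sub>x\<^sub>,\<^sub>y f (c - N x + N y)\<close> twice: summing over \<open>x\<close> and then \<open>y\<close> with the Lagrangian
  pair gives \<open>\<kappa>\<^sup>2 f c\<close>, translating \<open>x\<close> by \<open>y\<close> gives \<open>n\<^sup>8 f c\<close>.\<close>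
lemma card_annihilator:
  fixes f :: "int \<Rightarrow> 'a::{idom, ring_char_0}"
  assumes pf: "primitive_periodic n f" and "0 < n" and "f c \<noteq> 0" and lp: "lagrangian_pair n \<phi> \<psi>"
  shows "card (annihilator n \<psi>) = nat n ^ 4"
proof -
  let ?R = "residue_vectors n 8" and ?\<kappa> = "card (annihilator n \<psi>)"
  have "(\<Sum>x\<in>?R. f (c - octo_norm x + octo_norm y)) = of_nat ?\<kappa> * f (c + octo_norm y)" for y
    using lagrangian_pair_sum_octo_norm[OF pf \<open>0 < n\<close> lp, of "c + octo_norm y"]
    by (simp add: algebra_simps)
  then have "of_int n ^ 8 * f c = of_nat ?\<kappa> * (\<Sum>y\<in>?R. (\<lambda>z. f (- z)) (- c - octo_norm y))"
    using sum_sum_octo_norm_diff[OF pf \<open>0 < n\<close>, of c] by (simp add: sum_distrib_left add.commute)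
  also have "\<dots> = of_nat ?\<kappa> * (of_nat ?\<kappa> * f c)"
    using lagrangian_pair_sum_octo_norm[OF primitive_periodic_reflect[OF pf] \<open>0 < n\<close> lp, of "- c"]
    by simp
  finally have "(of_nat (nat n ^ 8) - of_nat (?\<kappa> * ?\<kappa>)) * f c = 0"
    using \<open>0 < n\<close> by (simp add: algebra_simps)
  then have "?\<kappa>^2 = (nat n ^ 4)^2"
    using \<open>f c \<noteq> 0\<close> by (simp add: power2_eq_square flip: power_mult of_nat_mult)
  then show ?thesis by (rule power_eq_imp_eq_base) simp_all
qed

lemma lagrangian_pair_one: "lagrangian_pair 1 \<phi> \<psi>"
  by (simp add: lagrangian_pair_def)

lemma lagrangian_pair_prime_power:
  fixes p s t :: int and k :: nat
  assumes "prime p" and "p dvd s^2 + t^2 + 1" and "\<not> p^2 dvd s^2 + t^2 + 1"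
  shows "lagrangian_pair (p ^ k) (similitude s t ^^ k) (\<lambda>x. gram ((similitude (- s) (- t) ^^ k) x))"
proof -
  obtain m where m: "s^2 + t^2 + 1 = p * m" using assms(2) by (auto elim: dvdE)
  have "\<not> p dvd m" using assms(3) m by (auto simp: power2_eq_square)
  then have "coprime (p ^ k) (m ^ k)" using prime_imp_coprime[OF \<open>prime p\<close>] by simp
  have scale: "(s^2 + t^2 + 1) ^ k = p ^ k * m ^ k" using m by (simp add: power_mult_distrib)
  have "octo_norm (vec_add x ((similitude s t ^^ k) y))
      = octo_norm x + dot (gram ((similitude (-s) (-t) ^^ k) x)) y + p ^ k * (m ^ k * octo_norm y)"
    for x y
    by (simp add: octo_norm_vec_add octo_norm_similitude_funpow dot_gram_similitude_funpow scale)
  then have isotropic: "[octo_norm (vec_add x ((similitude s t ^^ k) y))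
      = octo_norm x + dot (gram ((similitude (-s) (-t) ^^ k) x)) y] (mod p ^ k)" for x y
    by (simp add: cong_iff_dvd_diff)
  have maximal: "p ^ k dvd octo_norm x"
    if "\<forall>j<8. p ^ k dvd gram ((similitude (-s) (-t) ^^ k) x) ! j" for x
  proof -
    let ?z = "(similitude (-s) (-t) ^^ k) x"
    have "(p ^ k)^2 dvd octo_norm ?z" using that by (intro sq_dvd_octo_norm) (auto intro: dvd_gram_imp_dvd)
    also have "octo_norm ?z = p ^ k * (m ^ k * octo_norm x)"
      using octo_norm_similitude_funpow[where s = "- s" and t = "- t"] scale by simp
    finally have "p ^ k dvd m ^ k * octo_norm x"
      using \<open>prime p\<close> by (simp add: power2_eq_square prime_gt_0_int)
    then show ?thesis using \<open>coprime (p ^ k) (m ^ k)\<close> by (simp add: coprime_dvd_mult_right_iff)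
  qed
  show ?thesis unfolding lagrangian_pair_def using isotropic maximal by blast
qed

lemma lagrangian_pair_cong:
  assumes "lagrangian_pair n \<phi>' \<psi>'"
    and "\<And>y i. i < 8 \<Longrightarrow> [\<phi> y ! i = \<phi>' y ! i] (mod n)"
    and "\<And>x i. i < 8 \<Longrightarrow> [\<psi> x ! i = \<psi>' x ! i] (mod n)"
  shows "lagrangian_pair n \<phi> \<psi>"
  unfolding lagrangian_pair_def
proof (intro conjI allI impI)
  fix x y
  have "[octo_norm (vec_add x (\<phi> y)) = octo_norm (vec_add x (\<phi>' y))] (mod n)"
    by (rule octo_norm_cong) (simp add: vec_add_def assms(2) cong_add)
  also have "[octo_norm (vec_add x (\<phi>' y)) = octo_norm x + dot (\<psi>' x) y] (mod n)"
    using assms(1) by (simp add: lagrangian_pair_def)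
  also have "[octo_norm x + dot (\<psi>' x) y = octo_norm x + dot (\<psi> x) y] (mod n)"
    by (intro cong_add cong_refl dot_cong) (simp add: assms(3) cong_sym)
  finally show "[octo_norm (vec_add x (\<phi> y)) = octo_norm x + dot (\<psi> x) y] (mod n)" .
next
  fix x assume "\<forall>j<8. n dvd \<psi> x ! j"
  then have "\<forall>j<8. n dvd \<psi>' x ! j" using assms(3) cong_dvd_iff by blast
  then show "n dvd octo_norm x" using assms(1) by (simp add: lagrangian_pair_def)
qed

lemma lagrangian_pair_coprime_mult:
  assumes "lagrangian_pair a \<phi> \<psi>" and "lagrangian_pair b \<phi> \<psi>" and "coprime a b"
  shows "lagrangian_pair (a * b) \<phi> \<psi>"
  unfolding lagrangian_pair_def
proof (intro conjI allI impI)
  show "[octo_norm (vec_add x (\<phi> y)) = octo_norm x + dot (\<psi> x) y] (mod a * b)" for x y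
    using assms by (intro coprime_cong_mult) (simp_all add: lagrangian_pair_def)
  fix x assume "\<forall>j<8. a * b dvd \<psi> x ! j"
  then have "\<forall>j<8. a dvd \<psi> x ! j" "\<forall>j<8. b dvd \<psi> x ! j"
    using dvd_mult_left dvd_mult_right by blast+
  then show "a * b dvd octo_norm x"
    using assms by (intro divides_mult) (simp_all add: lagrangian_pair_def)
qed

definition crt :: "int \<Rightarrow> int \<Rightarrow> int \<Rightarrow> int \<Rightarrow> int" where
  "crt a b u v = (SOME z. [z = u] (mod a) \<and> [z = v] (mod b))"

lemma crt_cong:
  assumes "coprime a b"
  shows "[crt a b u v = u] (mod a)" and "[crt a b u v = v] (mod b)"
  using someI_ex[OF binary_chinese_remainder_int[OF assms, of u v]] by (simp_all add: crt_def)

lemma lagrangian_pair_mult: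
  assumes "lagrangian_pair a \<phi>1 \<psi>1" and "lagrangian_pair b \<phi>2 \<psi>2" and "coprime a b"
  shows "lagrangian_pair (a * b) (\<lambda>y. vec8 (\<lambda>i. crt a b (\<phi>1 y ! i) (\<phi>2 y ! i)))
    (\<lambda>x. vec8 (\<lambda>i. crt a b (\<psi>1 x ! i) (\<psi>2 x ! i)))"
  by (intro lagrangian_pair_coprime_mult lagrangian_pair_cong[OF assms(1)]
      lagrangian_pair_cong[OF assms(2)] \<open>coprime a b\<close>) (simp_all add: crt_cong[OF \<open>coprime a b\<close>])

lemma square_cong_prime_imp_eq:
  fixes p x y h :: int
  assumes "prime p" and "2 * h < p" and "x \<in> {0..h}" and "y \<in> {0..h}" and "[x^2 = y^2] (mod p)"
  shows "x = y"
proof -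
  have "p dvd (x - y) * (x + y)"
    using \<open>[x^2 = y^2] (mod p)\<close> by (simp add: cong_iff_dvd_diff power2_eq_square algebra_simps)
  then consider "p dvd x - y" | "p dvd x + y" using \<open>prime p\<close> prime_dvd_mult_iff by blast
  then show ?thesis
  proof cases
    case 1
    then show ?thesis using assms(2-4) zdvd_not_zless[of "x - y" p] zdvd_not_zless[of "y - x" p]
      by (fastforce simp: dvd_diff_commute)
  next
    case 2
    then show ?thesis using assms(2-4) zdvd_not_zless[of "x + y" p] by fastforce
  qed
qed

text \<open>Pigeonhole: the \<open>(p + 1)/2\<close> values of \<open>x\<^sup>2\<close> and of \<open>-1 - y\<^sup>2\<close> with \<open>0 \<le> x, y \<le> (p - 1)/2\<close> are
  distinct mod \<open>p\<close>, so the two families meet.\<close>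
lemma exists_sum_squares_plus_one_dvd:
  fixes p h :: int
  assumes "prime p" and "p = 2 * h + 1"
  obtains x y where "x \<in> {0..h}" "y \<in> {0..h}" "p dvd x^2 + y^2 + 1"
proof -
  let ?f = "\<lambda>x. x^2 mod p" and ?g = "\<lambda>y. (-1 - y^2) mod p"
  have "0 < p" using prime_gt_0_int[OF \<open>prime p\<close>] .
  have "inj_on ?f {0..h}"
    by (rule inj_onI, rule square_cong_prime_imp_eq[OF \<open>prime p\<close>, of h]) (auto simp: assms cong_def)
  moreover have "inj_on ?g {0..h}"
  proof (rule inj_onI, rule square_cong_prime_imp_eq[OF \<open>prime p\<close>, of h])
    fix x y assume "?g x = ?g y"
    then show "[x^2 = y^2] (mod p)"
      by (simp add: cong_def[symmetric] cong_iff_dvd_diff dvd_diff_commute)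
  qed (use assms in auto)
  ultimately have card: "card (?f ` {0..h}) + card (?g ` {0..h}) = 2 * nat (h + 1)"
    by (simp add: card_image)
  have sub: "?f ` {0..h} \<union> ?g ` {0..h} \<subseteq> {0..<p}" using \<open>0 < p\<close> by auto
  have "?f ` {0..h} \<inter> ?g ` {0..h} \<noteq> {}"
  proof
    assume "?f ` {0..h} \<inter> ?g ` {0..h} = {}"
    then have "card (?f ` {0..h} \<union> ?g ` {0..h}) = 2 * nat (h + 1)"
      using card by (simp add: card_Un_disjoint)
    then have "2 * nat (h + 1) \<le> nat p" using card_mono[OF _ sub] by simp
    then have "int (2 * nat (h + 1)) \<le> int (nat p)" by (simp only: of_nat_le_iff)
    then show False using \<open>p = 2 * h + 1\<close> \<open>0 < p\<close> by simp
  qed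
  then obtain x y where "x \<in> {0..h}" "y \<in> {0..h}" "x^2 mod p = (-1 - y^2) mod p"
    by blast
  moreover from this(3) have "p dvd x^2 + y^2 + 1"
    by (simp add: cong_def[symmetric] cong_iff_dvd_diff algebra_simps)
  ultimately show ?thesis using that by blast
qed

lemma exists_sum_squares_plus_one_exact_dvd:
  assumes "prime (p::nat)"
  obtains s t :: int where "int p dvd s^2 + t^2 + 1" and "\<not> (int p)^2 dvd s^2 + t^2 + 1"
proof (cases "p = 2")
  case True
  then show ?thesis using that[of 1 0] by simp
next
  case False
  then obtain h where "p = 2 * h + 1"
    using prime_odd_nat[OF \<open>prime p\<close>] prime_ge_2_nat[OF \<open>prime p\<close>] by (metis le_neq_implies_less oddE)
  then have "int p = 2 * int h + 1" by simp
  moreover have "prime (int p)" using \<open>prime p\<close> by simp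
  ultimately obtain x y where xy: "x \<in> {0..int h}" "y \<in> {0..int h}" "int p dvd x^2 + y^2 + 1"
    using exists_sum_squares_plus_one_dvd by metis
  have "1 \<le> h" using \<open>p = 2 * h + 1\<close> prime_ge_2_nat[OF \<open>prime p\<close>] by simp
  have "x^2 \<le> (int h)^2" "y^2 \<le> (int h)^2" using xy by (simp_all add: power_mono)
  moreover have "(int p)^2 = 4 * (int h)^2 + 4 * int h + 1"
    using \<open>p = 2 * h + 1\<close> by (simp add: power2_eq_square algebra_simps)
  ultimately have "x^2 + y^2 + 1 < (int p)^2"
    using \<open>1 \<le> h\<close> zero_le_power2[of "int h"] by linarith
  then have "\<not> (int p)^2 dvd x^2 + y^2 + 1"
    using zdvd_not_zless[of "x^2 + y^2 + 1" "(int p)^2"] by (simp add: add_nonneg_pos)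
  then show ?thesis using that xy by blast
qed

lemma prime_power_coprime_induct [consumes 1, case_names one prime_power coprime]:
  fixes P :: "nat \<Rightarrow> bool"
  assumes "0 < n"
    and "P 1"
    and "\<And>p k. prime p \<Longrightarrow> P (p ^ k)"
    and "\<And>a b. coprime a b \<Longrightarrow> P a \<Longrightarrow> P b \<Longrightarrow> P (a * b)"
  shows "P n"
  using \<open>0 < n\<close>
proof (induction n rule: less_induct)
  case (less n)
  show ?case
  proof (cases "n = 1")
    case True
    then show ?thesis using \<open>P 1\<close> by simp
  next
    case False
    then obtain p where "prime p" "p dvd n" using prime_factor_nat by blast
    obtain m where n: "n = p ^ multiplicity p n * m" and "\<not> p dvd m"
      using multiplicity_decompose'[of n p] \<open>0 < n\<close> not_prime_unit[of p] \<open>prime p\<close> by blast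
    have "0 < m" using \<open>0 < n\<close> n by (cases m) auto
    have "m \<noteq> n"
      using \<open>p dvd n\<close> \<open>\<not> p dvd m\<close> by blast
    moreover have "m dvd n" using n by (metis dvd_triv_right)
    ultimately have "m < n" using \<open>0 < n\<close> by (simp add: dvd_imp_le le_neq_implies_less)
    then have "P m" using less.IH \<open>0 < m\<close> by blast
    moreover have "coprime (p ^ multiplicity p n) m"
      using prime_imp_coprime[OF \<open>prime p\<close> \<open>\<not> p dvd m\<close>] by simp
    ultimately have "P (p ^ multiplicity p n * m)"
      using assms(3)[OF \<open>prime p\<close>] assms(4) by blast
    then show ?thesis using n by simp
  qed
qed

lemma lagrangian_pair_exists:
  assumes "0 < N"
  obtains \<phi> \<psi> where "lagrangian_pair (int N) \<phi> \<psi>"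
proof -
  have "\<exists>\<phi> \<psi>. lagrangian_pair (int N) \<phi> \<psi>"
    using assms
  proof (induction N rule: prime_power_coprime_induct)
    case one
    then show ?case using lagrangian_pair_one by auto
  next
    case (prime_power p k)
    then obtain s t where "int p dvd s^2 + t^2 + 1" "\<not> (int p)^2 dvd s^2 + t^2 + 1"
      using exists_sum_squares_plus_one_exact_dvd by blast
    then have "lagrangian_pair (int p ^ k) (similitude s t ^^ k)
        (\<lambda>x. gram ((similitude (- s) (- t) ^^ k) x))"
      using \<open>prime p\<close> by (intro lagrangian_pair_prime_power) simp_all
    then show ?case unfolding of_nat_power by blast
  next
    case (coprime a b)
    then obtain \<phi>1 \<psi>1 \<phi>2 \<psi>2 where
      "lagrangian_pair (int a) \<phi>1 \<psi>1" "lagrangian_pair (int b) \<phi>2 \<psi>2"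
      by blast
    moreover have "coprime (int a) (int b)" using \<open>coprime a b\<close> by simp
    ultimately have "lagrangian_pair (int a * int b)
        (\<lambda>y. vec8 (\<lambda>i. crt (int a) (int b) (\<phi>1 y ! i) (\<phi>2 y ! i)))
        (\<lambda>x. vec8 (\<lambda>i. crt (int a) (int b) (\<psi>1 x ! i) (\<psi>2 x ! i)))"
      by (rule lagrangian_pair_mult)
    then show ?case unfolding of_nat_mult by blast
  qed
  then show ?thesis using that by blast
qed

lemma sum_primitive_char_octo_norm:
  assumes "0 < N" and "primitive_dirichlet_char N \<chi>"
  shows "(\<Sum>x\<in>octo_mod N. \<chi> (c - octo_norm x)) = of_nat N ^ 4 * \<chi> c"
proof -
  have pf: "primitive_periodic (int N) \<chi>"
    using assms by (rule primitive_dirichlet_char_imp_primitive_periodic)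
  have "\<chi> 1 \<noteq> 0" using assms(2) by (simp add: primitive_dirichlet_char_def dirichlet_char_def)
  obtain \<phi> \<psi> where lp: "lagrangian_pair (int N) \<phi> \<psi>"
    using lagrangian_pair_exists[OF assms(1)] .
  have "octo_mod N = residue_vectors (int N) 8"
    by (auto simp: octo_mod_def residue_vectors_def)
  then show ?thesis
    using lagrangian_pair_sum_octo_norm[OF pf _ lp] card_annihilator[OF pf _ \<open>\<chi> 1 \<noteq> 0\<close> lp] assms(1)
    by simp
qed

theorem lemma4p9:
  fixes N :: nat and \<chi> \<eta> :: "int \<Rightarrow> complex"
  assumes "0 < N"
    and "primitive_dirichlet_char N \<chi>"
    and "dirichlet_char N \<eta>"
  shows "jacobi_J2 N \<chi> \<eta> = of_nat N ^ 4 * jacobi3 N \<chi> \<chi> \<eta>"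
proof -
  have mult: "\<chi> (a * b) = \<chi> a * \<chi> b" for a b
    using assms(2) by (simp add: primitive_dirichlet_char_def dirichlet_char_def)
  have "jacobi_J2 N \<chi> \<eta> = (\<Sum>a\<in>{0..<int N}. \<Sum>b\<in>{0..<int N}.
      (\<Sum>x\<in>octo_mod N. \<chi> (a * b - octo_norm x)) * \<eta> (1 - (a + b)))"
    unfolding jacobi_J2_def by (simp add: sum_distrib_right)
  also have "\<dots> = (\<Sum>a\<in>{0..<int N}. \<Sum>b\<in>{0..<int N}.
      of_nat N ^ 4 * (\<chi> a * \<chi> b * \<eta> (1 - a - b)))"
    by (simp add: sum_primitive_char_octo_norm[OF assms(1,2)] mult diff_diff_eq mult.assoc)
  also have "\<dots> = of_nat N ^ 4 * jacobi3 N \<chi> \<chi> \<eta>"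
    unfolding jacobi3_def by (simp add: sum_distrib_left)
  finally show ?thesis .
qed

end
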